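(* For every integer $k\ge0$ there exists a map $f:U_{k+1}\to U_k$ with $\operatorname{dis}(f)=1$.
   Context: For metric spaces $X,Y$ and $a>0$, $X\overset{a}{\sqcup}Y$ is the disjoint union with the original metrics on each part and distance $a$ between points of different parts. The sequence $(U_k)_{k\ge0}$: $U_0$ is a one-point space, $U_1$ is a two-point space with distance $1$, and $U_k=U_{k-2}\overset{k}{\sqcup}U_{k-2}$ for $k>1$. For $f:X\to Y$, $\operatorname{dis}(f)=\sup_{x,x'\in X}|d_X(x,x')-d_Y(f(x),f(x'))|$. *)

theory Defs
  imports Complex_Main
begin

text \<open>The points of U_k are boolean lists: U_0 = {[]},
U_1 = {[False],[True]}, and U_(k+2) consists of two tagged copies b # x of U_k.\<close>

fun U_pts :: "nat \<Rightarrow> bool list set" where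
  "U_pts 0 = {[]}"
| "U_pts (Suc 0) = {[False], [True]}"
| "U_pts (Suc (Suc k)) = {b # x | b x. x \<in> U_pts k}"

fun U_dist :: "nat \<Rightarrow> bool list \<Rightarrow> bool list \<Rightarrow> real" where
  "U_dist 0 x y = 0"
| "U_dist (Suc 0) x y = (if x = y then 0 else 1)"
| "U_dist (Suc (Suc k)) (a # x) (b # y) =
     (if a = b then U_dist k x y else real (Suc (Suc k)))"
| "U_dist (Suc (Suc k)) _ _ = 0"

definition dis :: "'a set \<Rightarrow> ('a \<Rightarrow> 'a \<Rightarrow> real) \<Rightarrow> ('b \<Rightarrow> 'b \<Rightarrow> real) \<Rightarrow> ('a \<Rightarrow> 'b) \<Rightarrow> real" where
  "dis X dX dY f = (SUP p \<in> X \<times> X. \<bar>dX (fst p) (snd p) - dY (f (fst p)) (f (snd p))\<bar>)"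

end

theory Submission
  imports Defs
begin

text \<open>U_(k+1) consists of two copies of U_(k-1) at distance k+1, and U_k of two copies
of U_(k-2) at distance k. So a map U_(k-1) \<rightarrow> U_(k-2) applied in each copy gives a map
U_(k+1) \<rightarrow> U_k under which every distance between the two copies drops from k+1 to k.
Starting from the constant map U_1 \<rightarrow> U_0 and the bijection U_2 \<rightarrow> U_1, induction
shows that the distance of every pair of distinct points changes by exactly 1, so the
distortion is 1. On boolean lists this map is truncation to the length (k+1) div 2 of
the points of U_k.\<close>

lemma U_pts_nonempty: "U_pts k \<noteq> {}"
  by (induction k rule: U_pts.induct) auto

lemma U_pts_Suc_two_points: "\<exists>x \<in> U_pts (Suc k). \<exists>y \<in> U_pts (Suc k). x \<noteq> y"
proof (cases k)
  case 0
  then show ?thesis by auto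
next
  case (Suc j)
  obtain x where "x \<in> U_pts j"
    using U_pts_nonempty by blast
  then have "False # x \<in> U_pts (Suc k)" "True # x \<in> U_pts (Suc k)"
    using Suc by auto
  then show ?thesis
    using Suc by blast
qed

lemma take_mem_U_pts:
  "x \<in> U_pts (Suc k) \<Longrightarrow> take (Suc k div 2) x \<in> U_pts k"
  by (induction k arbitrary: x rule: U_pts.induct) auto

lemma U_dist_take_distortion:
  assumes "x \<in> U_pts (Suc k)" and "y \<in> U_pts (Suc k)"
  shows "\<bar>U_dist (Suc k) x y - U_dist k (take (Suc k div 2) x) (take (Suc k div 2) y)\<bar>
           = (if x = y then 0 else 1)"
  using assms
proof (induction k arbitrary: x y rule: U_pts.induct)
  case (3 k)
  from "3.prems" obtain a x' b y' where
    "x = a # x'" "x' \<in> U_pts (Suc k)" "y = b # y'" "y' \<in> U_pts (Suc k)"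
    by auto
  with "3.IH" show ?case
    by auto
qed auto

lemma dis_eqI:
  assumes bound: "\<And>x y. x \<in> X \<Longrightarrow> y \<in> X \<Longrightarrow> \<bar>dX x y - dY (f x) (f y)\<bar> \<le> c"
    and attained: "x\<^sub>0 \<in> X" "y\<^sub>0 \<in> X" "\<bar>dX x\<^sub>0 y\<^sub>0 - dY (f x\<^sub>0) (f y\<^sub>0)\<bar> = c"
  shows "dis X dX dY f = c"
  unfolding dis_def
proof (rule cSup_eq_maximum)
  show "c \<in> (\<lambda>p. \<bar>dX (fst p) (snd p) - dY (f (fst p)) (f (snd p))\<bar>) ` (X \<times> X)"
    using attained by force
qed (use bound in auto)

theorem claim7:
  fixes k :: nat
  shows "\<exists>f. (\<forall>x \<in> U_pts (Suc k). f x \<in> U_pts k)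
             \<and> dis (U_pts (Suc k)) (U_dist (Suc k)) (U_dist k) f = 1"
proof (intro exI conjI)
  let ?f = "take (Suc k div 2) :: bool list \<Rightarrow> bool list"
  show "\<forall>x \<in> U_pts (Suc k). ?f x \<in> U_pts k"
    using take_mem_U_pts by blast
  obtain x\<^sub>0 y\<^sub>0 where "x\<^sub>0 \<in> U_pts (Suc k)" "y\<^sub>0 \<in> U_pts (Suc k)" "x\<^sub>0 \<noteq> y\<^sub>0"
    using U_pts_Suc_two_points by blast
  then show "dis (U_pts (Suc k)) (U_dist (Suc k)) (U_dist k) ?f = 1"
    by (intro dis_eqI[of _ _ _ _ _ x\<^sub>0 y\<^sub>0]) (simp_all add: U_dist_take_distortion)
qed

end
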